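(* Any degree-three IQP circuit $H^{\otimes n}D_{IQP3}H^{\otimes n}$ on $n$ qubits whose diagonal part $D_{IQP3}$ consists of $d$ layers of $Z$, $CZ$ and $CCZ$ gates can be compiled, after appending $O(nd)$ ancilla qubits initialized to $|0\rangle$ (and returned to $|0\rangle$), into an equivalent circuit consisting of Clifford gates and a single layer of gates $T^{\pm1}$.
   Context: A degree-three IQP circuit has the form $H^{\otimes n}D_{IQP3}H^{\otimes n}$ where $D_{IQP3}$ is a product of $Z$, $CZ$ and $CCZ$ gates. $T=\mathrm{diag}(1,e^{i\pi/4})$. A single layer means the $T^{\pm1}$ gates act in parallel on distinct qubits. The Clifford group is generated by $H$, $S=\mathrm{diag}(1,i)$ and CNOT. *)

theory Defs
  imports Complex_Main
begin

text \<open>Qubits are numbered 0,1,2,...; a computational basis state of N qubits is a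
  bool list of length N (entry i = value of qubit i). An operator on N qubits is given
  by its matrix entries, a function from (row basis state, column basis state) to complex.\<close>

datatype gate =
    H nat | S nat | CNOT nat nat | T nat | Tdg nat
  | Z nat | CZ nat nat | CCZ nat nat nat

fun gate_qubits :: "gate \<Rightarrow> nat list" where
  "gate_qubits (H i) = [i]"
| "gate_qubits (S i) = [i]"
| "gate_qubits (CNOT c t) = [c, t]"
| "gate_qubits (T i) = [i]"
| "gate_qubits (Tdg i) = [i]"
| "gate_qubits (Z i) = [i]"
| "gate_qubits (CZ i j) = [i, j]"
| "gate_qubits (CCZ i j k) = [i, j, k]"

definition bits :: "nat \<Rightarrow> bool list set" where
  "bits N = {x. length x = N}"

fun gate_mat :: "gate \<Rightarrow> bool list \<Rightarrow> bool list \<Rightarrow> complex" where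
  "gate_mat (H i) x y =
     (if x[i := False] = y[i := False]
      then (if x ! i \<and> y ! i then -1 else 1) / complex_of_real (sqrt 2) else 0)"
| "gate_mat (S i) x y = (if x = y then (if x ! i then \<i> else 1) else 0)"
| "gate_mat (CNOT c t) x y = (if x = y[t := (y ! t \<noteq> y ! c)] then 1 else 0)"
| "gate_mat (T i) x y = (if x = y then (if x ! i then exp (\<i> * complex_of_real (pi / 4)) else 1) else 0)"
| "gate_mat (Tdg i) x y = (if x = y then (if x ! i then exp (- \<i> * complex_of_real (pi / 4)) else 1) else 0)"
| "gate_mat (Z i) x y = (if x = y then (if x ! i then -1 else 1) else 0)"
| "gate_mat (CZ i j) x y = (if x = y then (if x ! i \<and> x ! j then -1 else 1) else 0)"
| "gate_mat (CCZ i j k) x y = (if x = y then (if x ! i \<and> x ! j \<and> x ! k then -1 else 1) else 0)"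

text \<open>Matrix of a circuit on N qubits; the list is in time order (first gate applied first).\<close>
fun circ_mat :: "nat \<Rightarrow> gate list \<Rightarrow> bool list \<Rightarrow> bool list \<Rightarrow> complex" where
  "circ_mat N [] x z = (if x = z then 1 else 0)"
| "circ_mat N (g # gs) x z = (\<Sum>y\<in>bits N. circ_mat N gs x y * gate_mat g y z)"

definition wf_gate :: "nat \<Rightarrow> gate \<Rightarrow> bool" where
  "wf_gate N g \<longleftrightarrow> distinct (gate_qubits g) \<and> (\<forall>q\<in>set (gate_qubits g). q < N)"

definition is_layer :: "nat \<Rightarrow> gate list \<Rightarrow> bool" where
  "is_layer N L \<longleftrightarrow> (\<forall>g\<in>set L. wf_gate N g) \<and> distinct (concat (map gate_qubits L))"

fun is_diag3_gate :: "gate \<Rightarrow> bool" where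
  "is_diag3_gate (Z _) = True"
| "is_diag3_gate (CZ _ _) = True"
| "is_diag3_gate (CCZ _ _ _) = True"
| "is_diag3_gate _ = False"

fun is_clifford_gate :: "gate \<Rightarrow> bool" where
  "is_clifford_gate (H _) = True"
| "is_clifford_gate (S _) = True"
| "is_clifford_gate (CNOT _ _) = True"
| "is_clifford_gate _ = False"

fun is_T_gate :: "gate \<Rightarrow> bool" where
  "is_T_gate (T _) = True"
| "is_T_gate (Tdg _) = True"
| "is_T_gate _ = False"

definition hadamard_all :: "nat \<Rightarrow> gate list" where
  "hadamard_all n = map H [0..<n]"

definition iqp3_circuit :: "nat \<Rightarrow> gate list list \<Rightarrow> gate list" where
  "iqp3_circuit n layers = hadamard_all n @ concat layers @ hadamard_all n"

end

theory Submission
  imports Defs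
begin

text \<open>With \<open>\<omega> = exp (i\<pi>/4)\<close>, the phases of \<open>Z\<close>, \<open>CZ\<close> and \<open>CCZ\<close> are \<open>\<omega>\<close> raised to
  \<open>4x\<close>, \<open>4xy\<close>, \<open>4xyz\<close>, and these are integer combinations of parities of subsets of the
  qubits involved, e.g. \<open>4xy = 2x + 2y - 2(x \<oplus> y)\<close>. Every term \<open>\<omega>^(\<plusminus>parity)\<close> of this
  expansion gets its own ancilla: a fan of CNOTs writes all the parities into the ancillas, a
  single parallel layer of \<open>T\<close> and \<open>T\<dagger>\<close> gates applies all the phases at once, and the same
  fan of CNOTs returns the ancillas to zero. The Hadamard layers never touch the ancillas. With
  at most 7 terms per gate and at most \<open>n\<close> gates per layer, \<open>7nd\<close> ancillas suffice.\<close>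

fun is_hadamard :: "gate \<Rightarrow> bool" where
  "is_hadamard (H _) = True"
| "is_hadamard _ = False"

fun gate_action :: "gate \<Rightarrow> bool list \<Rightarrow> bool list" where
  "gate_action (CNOT c t) z = z[t := (z ! t \<noteq> z ! c)]"
| "gate_action _ z = z"

fun gate_phase :: "gate \<Rightarrow> bool list \<Rightarrow> complex" where
  "gate_phase (S i) z = (if z ! i then \<i> else 1)"
| "gate_phase (T i) z = (if z ! i then exp (\<i> * complex_of_real (pi / 4)) else 1)"
| "gate_phase (Tdg i) z = (if z ! i then exp (- \<i> * complex_of_real (pi / 4)) else 1)"
| "gate_phase (Z i) z = (if z ! i then -1 else 1)"
| "gate_phase (CZ i j) z = (if z ! i \<and> z ! j then -1 else 1)"
| "gate_phase (CCZ i j k) z = (if z ! i \<and> z ! j \<and> z ! k then -1 else 1)"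
| "gate_phase _ z = 1"

lemma gate_mat_non_hadamard:
  "\<not> is_hadamard g \<Longrightarrow> gate_mat g y z = (if y = gate_action g z then gate_phase g z else 0)"
  by (cases g) auto

fun circ_action :: "gate list \<Rightarrow> bool list \<Rightarrow> bool list" where
  "circ_action [] z = z"
| "circ_action (g # gs) z = circ_action gs (gate_action g z)"

fun circ_phase :: "gate list \<Rightarrow> bool list \<Rightarrow> complex" where
  "circ_phase [] z = 1"
| "circ_phase (g # gs) z = gate_phase g z * circ_phase gs (gate_action g z)"

lemma circ_action_append: "circ_action (gs @ hs) z = circ_action hs (circ_action gs z)"
  by (induction gs arbitrary: z) auto

lemma circ_phase_append:
  "circ_phase (gs @ hs) z = circ_phase gs z * circ_phase hs (circ_action gs z)"
  by (induction gs arbitrary: z) (auto simp: mult.assoc)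

lemma length_gate_action [simp]: "length (gate_action g z) = length z"
  by (cases g) auto

lemma circ_action_trivial: "\<forall>g\<in>set gs. \<forall>z. gate_action g z = z \<Longrightarrow> circ_action gs z = z"
  by (induction gs) auto

lemma circ_phase_trivial_action:
  "\<forall>g\<in>set gs. \<forall>z. gate_action g z = z \<Longrightarrow> circ_phase gs z = (\<Prod>g\<leftarrow>gs. gate_phase g z)"
  by (induction gs) auto

lemma circ_phase_cnots: "\<forall>g\<in>set gs. \<exists>c t. g = CNOT c t \<Longrightarrow> circ_phase gs z = 1"
  by (induction gs arbitrary: z) auto

lemma finite_bits [simp]: "finite (bits N)"
  unfolding bits_def using finite_lists_length_eq[of "UNIV :: bool set" N] by simp

lemma append_in_bits_iff [simp]: "a \<in> bits n \<Longrightarrow> a @ b \<in> bits (n + m) \<longleftrightarrow> b \<in> bits m"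
  by (simp add: bits_def)

lemma replicate_in_bits [simp]: "replicate m False \<in> bits m"
  by (simp add: bits_def)

lemma circ_mat_non_hadamard:
  assumes "\<forall>g\<in>set gs. \<not> is_hadamard g" "z \<in> bits N"
  shows "circ_mat N gs x z = (if x = circ_action gs z then circ_phase gs z else 0)"
  using assms
proof (induction gs arbitrary: z)
  case (Cons g gs)
  have g: "\<not> is_hadamard g" and z': "gate_action g z \<in> bits N"
    using Cons.prems by (auto simp: bits_def)
  have "circ_mat N (g # gs) x z =
      (\<Sum>y\<in>bits N. if y = gate_action g z then circ_mat N gs x y * gate_phase g z else 0)"
    unfolding circ_mat.simps gate_mat_non_hadamard[OF g] by (rule sum.cong) auto
  also have "\<dots> = circ_mat N gs x (gate_action g z) * gate_phase g z"
    using z' by simp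
  finally show ?case
    using Cons.IH[OF _ z'] Cons.prems by simp
qed simp

lemma circ_mat_append:
  assumes "z \<in> bits N"
  shows "circ_mat N (gs @ hs) x z = (\<Sum>y\<in>bits N. circ_mat N hs x y * circ_mat N gs y z)"
  using assms
proof (induction gs arbitrary: z)
  case Nil
  then show ?case by (simp add: if_distrib cong: if_cong)
next
  case (Cons g gs)
  have "circ_mat N ((g # gs) @ hs) x z =
      (\<Sum>y\<in>bits N. \<Sum>q\<in>bits N. circ_mat N hs x q * (circ_mat N gs q y * gate_mat g y z))"
    using Cons.IH by (simp add: sum_distrib_right mult.assoc)
  also have "\<dots> = (\<Sum>q\<in>bits N. circ_mat N hs x q * circ_mat N (g # gs) q z)"
    by (subst sum.swap) (simp add: sum_distrib_left)
  finally show ?case .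
qed

lemma sum_bits_append:
  "(\<Sum>q\<in>bits (n + m). f q) = (\<Sum>a\<in>bits n. \<Sum>b\<in>bits m. f (a @ b))"
proof -
  let ?app = "\<lambda>(a, b). a @ b"
  have inj: "inj_on ?app (bits n \<times> bits m)"
  proof (rule inj_onI)
    fix x y assume "x \<in> bits n \<times> bits m" "y \<in> bits n \<times> bits m" "?app x = ?app y"
    then show "x = y" by (cases x, cases y) (simp add: bits_def)
  qed
  have "bits (n + m) = ?app ` (bits n \<times> bits m)"
  proof
    show "bits (n + m) \<subseteq> ?app ` (bits n \<times> bits m)"
    proof
      fix q assume "q \<in> bits (n + m)"
      then have "(take n q, drop n q) \<in> bits n \<times> bits m"
        by (simp add: bits_def)
      then show "q \<in> ?app ` (bits n \<times> bits m)"
        by (rule rev_image_eqI) simp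
    qed
  qed (auto simp: bits_def)
  then have "(\<Sum>q\<in>bits (n + m). f q) = (\<Sum>x\<in>bits n \<times> bits m. f (?app x))"
    using sum.reindex[OF inj, of f] by simp
  then show ?thesis
    by (simp add: sum.cartesian_product split_def)
qed

lemma gate_mat_append_ancillas:
  assumes "wf_gate n g" "a \<in> bits n" "c \<in> bits n" "b \<in> bits m" "d \<in> bits m"
  shows "gate_mat g (a @ b) (c @ d) = gate_mat g a c * (if b = d then 1 else 0)"
  using assms by (cases g) (auto simp: wf_gate_def bits_def list_update_append nth_append)

definition ignores_ancillas :: "nat \<Rightarrow> nat \<Rightarrow> gate list \<Rightarrow> bool" where
  "ignores_ancillas n m U \<longleftrightarrow> (\<forall>a\<in>bits n. \<forall>b\<in>bits m. \<forall>c\<in>bits n. \<forall>d\<in>bits m.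
     circ_mat (n + m) U (a @ b) (c @ d) = circ_mat n U a c * (if b = d then 1 else 0))"

lemma ignores_ancillas_wf_gates:
  "\<forall>g\<in>set gs. wf_gate n g \<Longrightarrow> ignores_ancillas n m gs"
proof (induction gs)
  case Nil
  then show ?case by (auto simp: ignores_ancillas_def bits_def)
next
  case (Cons g gs)
  show ?case
    unfolding ignores_ancillas_def
  proof (intro ballI)
    fix a b c d assume ab: "a \<in> bits n" "b \<in> bits m" and cd: "c \<in> bits n" "d \<in> bits m"
    have IH: "ignores_ancillas n m gs" and g: "wf_gate n g"
      using Cons by auto
    have "circ_mat (n + m) (g # gs) (a @ b) (c @ d) =
        (\<Sum>a'\<in>bits n. \<Sum>b'\<in>bits m.
          circ_mat (n + m) gs (a @ b) (a' @ b') * gate_mat g (a' @ b') (c @ d))"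
      by (simp add: sum_bits_append del: gate_mat.simps)
    also have "\<dots> = (\<Sum>a'\<in>bits n. \<Sum>b'\<in>bits m. if b' = b then
           circ_mat n gs a a' * gate_mat g a' c * (if b = d then 1 else 0) else 0)"
      using IH g ab cd unfolding ignores_ancillas_def
      by (intro sum.cong refl) (simp add: gate_mat_append_ancillas del: gate_mat.simps)
    also have "\<dots> = circ_mat n (g # gs) a c * (if b = d then 1 else 0)"
      using ab by (simp add: sum_distrib_right)
    finally show "circ_mat (n + m) (g # gs) (a @ b) (c @ d) =
        circ_mat n (g # gs) a c * (if b = d then 1 else 0)" .
  qed
qed

text \<open>The first argument of \<^const>\<open>circ_mat\<close> is the output state: ancillas enter as zeros and
  leave as zeros.\<close>
definition implements_with_ancillas :: "nat \<Rightarrow> nat \<Rightarrow> gate list \<Rightarrow> gate list \<Rightarrow> bool" where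
  "implements_with_ancillas n m M D \<longleftrightarrow> (\<forall>x\<in>bits n. \<forall>z\<in>bits n. \<forall>y\<in>bits m.
     circ_mat (n + m) M (x @ y) (z @ replicate m False) =
     (if y = replicate m False then circ_mat n D x z else 0))"

lemma implements_with_ancillas_prepend:
  assumes U: "ignores_ancillas n m U" and M: "implements_with_ancillas n m M D"
  shows "implements_with_ancillas n m (U @ M) (U @ D)"
  unfolding implements_with_ancillas_def
proof (intro ballI)
  fix x z y assume x: "x \<in> bits n" and z: "z \<in> bits n" and y: "y \<in> bits m"
  let ?O = "replicate m False"
  have "circ_mat (n + m) (U @ M) (x @ y) (z @ ?O) =
      (\<Sum>c\<in>bits n. \<Sum>d\<in>bits m.
        circ_mat (n + m) M (x @ y) (c @ d) * circ_mat (n + m) U (c @ d) (z @ ?O))"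
    using z by (simp add: circ_mat_append sum_bits_append)
  also have "\<dots> = (\<Sum>c\<in>bits n. \<Sum>d\<in>bits m.
      if d = ?O then circ_mat (n + m) M (x @ y) (c @ d) * circ_mat n U c z else 0)"
    using U z unfolding ignores_ancillas_def by (intro sum.cong refl) simp
  also have "\<dots> = (\<Sum>c\<in>bits n. if y = ?O then circ_mat n D x c * circ_mat n U c z else 0)"
    using M x y by (cases "y = ?O") (simp_all add: implements_with_ancillas_def)
  also have "\<dots> = (if y = ?O then circ_mat n (U @ D) x z else 0)"
    using z by (simp add: circ_mat_append)
  finally show "circ_mat (n + m) (U @ M) (x @ y) (z @ ?O) =
      (if y = ?O then circ_mat n (U @ D) x z else 0)" .
qed

lemma implements_with_ancillas_append:
  assumes M: "implements_with_ancillas n m M D" and V: "ignores_ancillas n m V"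
  shows "implements_with_ancillas n m (M @ V) (D @ V)"
  unfolding implements_with_ancillas_def
proof (intro ballI)
  fix x z y assume x: "x \<in> bits n" and z: "z \<in> bits n" and y: "y \<in> bits m"
  let ?O = "replicate m False"
  have "circ_mat (n + m) (M @ V) (x @ y) (z @ ?O) =
      (\<Sum>c\<in>bits n. \<Sum>d\<in>bits m.
        circ_mat (n + m) V (x @ y) (c @ d) * circ_mat (n + m) M (c @ d) (z @ ?O))"
    using z by (simp add: circ_mat_append sum_bits_append)
  also have "\<dots> = (\<Sum>c\<in>bits n. \<Sum>d\<in>bits m.
      if d = y then circ_mat n V x c * circ_mat (n + m) M (c @ d) (z @ ?O) else 0)"
    using V x y unfolding ignores_ancillas_def by (intro sum.cong refl) auto
  also have "\<dots> = (\<Sum>c\<in>bits n. if y = ?O then circ_mat n V x c * circ_mat n D c z else 0)"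
    using M y z by (cases "y = ?O") (simp_all add: implements_with_ancillas_def)
  also have "\<dots> = (if y = ?O then circ_mat n (D @ V) x z else 0)"
    using z by (simp add: circ_mat_append)
  finally show "circ_mat (n + m) (M @ V) (x @ y) (z @ ?O) =
      (if y = ?O then circ_mat n (D @ V) x z else 0)" .
qed

fun parity :: "bool list \<Rightarrow> nat list \<Rightarrow> bool" where
  "parity z [] = False"
| "parity z (c # cs) = (z ! c \<noteq> parity z cs)"

lemma parity_update: "t \<notin> set cs \<Longrightarrow> parity (z[t := b]) cs = parity z cs"
  by (induction cs) auto

lemma parity_append: "set cs \<subseteq> {..<length v} \<Longrightarrow> parity (v @ w) cs = parity v cs"
  by (induction cs) (auto simp: nth_append)

lemma circ_action_cnots:
  assumes "t \<notin> set cs" "t < length z"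
  shows "circ_action (map (\<lambda>c. CNOT c t) cs) z = z[t := (z ! t \<noteq> parity z cs)]"
  using assms
proof (induction cs arbitrary: z)
  case (Cons c cs)
  then show ?case
    by (cases "z ! t"; cases "z ! c"; cases "parity z cs") (simp_all add: parity_update)
qed simp

definition cnot_fan :: "nat \<Rightarrow> (nat \<Rightarrow> nat list) \<Rightarrow> nat \<Rightarrow> gate list" where
  "cnot_fan n cs m = concat (map (\<lambda>k. map (\<lambda>c. CNOT c (n + k)) (cs k)) [0..<m])"

lemma circ_action_cnot_fan:
  assumes v: "length v = n" and "m \<le> length w" and cs: "\<forall>k<m. set (cs k) \<subseteq> {..<n}"
  shows "circ_action (cnot_fan n cs m) (v @ w) =
    v @ map (\<lambda>k. w ! k \<noteq> parity v (cs k)) [0..<m] @ drop m w"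
  using assms(2,3)
proof (induction m)
  case 0
  then show ?case by (simp add: cnot_fan_def)
next
  case (Suc m)
  let ?p = "\<lambda>k. w ! k \<noteq> parity v (cs k)"
  let ?w = "map ?p [0..<m] @ drop m w"
  have m: "m < length w" and csm: "set (cs m) \<subseteq> {..<n}"
    using Suc.prems by auto
  have "circ_action (cnot_fan n cs (Suc m)) (v @ w) =
      circ_action (map (\<lambda>c. CNOT c (n + m)) (cs m)) (v @ ?w)"
    using Suc by (simp add: cnot_fan_def circ_action_append)
  also have "\<dots> = (v @ ?w)[n + m := (v @ ?w) ! (n + m) \<noteq> parity (v @ ?w) (cs m)]"
    using m csm v by (intro circ_action_cnots) auto
  also have "\<dots> = v @ ?w[m := ?p m]"
    using m csm v by (simp add: list_update_append nth_append parity_append)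
  also have "?w[m := ?p m] = map ?p [0..<Suc m] @ drop (Suc m) w"
    using m by (simp add: list_update_append Cons_nth_drop_Suc[symmetric])
  finally show ?case .
qed

lemma circ_action_cnot_fan_all:
  assumes "length v = n" "length w = m" "\<forall>k<m. set (cs k) \<subseteq> {..<n}"
  shows "circ_action (cnot_fan n cs m) (v @ w) = v @ map (\<lambda>k. w ! k \<noteq> parity v (cs k)) [0..<m]"
  using circ_action_cnot_fan[of v n m w cs] assms by simp

lemma cnot_fan_wf_clifford:
  assumes "\<forall>k<m. set (cs k) \<subseteq> {..<n}" "g \<in> set (cnot_fan n cs m)"
  shows "is_clifford_gate g \<and> wf_gate (n + m) g"
proof -
  obtain k c where "k < m" "c \<in> set (cs k)" "g = CNOT c (n + k)"
    using assms(2) by (auto simp: cnot_fan_def)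
  moreover have "c < n"
    using assms(1) calculation by blast
  ultimately show ?thesis
    by (simp add: wf_gate_def)
qed

definition omega8 :: complex where
  "omega8 = exp (\<i> * complex_of_real (pi / 4))"

lemma omega8_power_4: "omega8 ^ 4 = -1"
proof -
  have "omega8 ^ 4 = exp (of_nat 4 * (\<i> * complex_of_real (pi / 4)))"
    unfolding omega8_def by (rule exp_of_nat_mult[symmetric])
  also have "of_nat 4 * (\<i> * complex_of_real (pi / 4)) = \<i> * of_real pi"
    by simp
  finally show ?thesis by simp
qed

lemma omega8_power_8: "omega8 ^ 8 = 1"
proof -
  have "omega8 ^ 8 = (omega8 ^ 4) ^ 2"
    by (simp flip: power_mult)
  then show ?thesis
    by (simp add: omega8_power_4)
qed

lemma omega8_power_mod: "omega8 ^ k = omega8 ^ (k mod 8)"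
proof -
  have "omega8 ^ k = omega8 ^ (8 * (k div 8) + k mod 8)"
    by simp
  also have "\<dots> = (omega8 ^ 8) ^ (k div 8) * omega8 ^ (k mod 8)"
    by (simp only: power_add power_mult)
  finally show ?thesis
    by (simp add: omega8_power_8)
qed

lemma exp_minus_pi_4: "exp (- \<i> * complex_of_real (pi / 4)) = omega8 ^ 7"
proof -
  let ?u = "exp (- \<i> * complex_of_real (pi / 4))"
  have inv: "?u * omega8 = 1"
    by (simp add: omega8_def flip: exp_add)
  have "omega8 ^ 7 = omega8 ^ 7 * (?u * omega8)"
    by (simp only: inv mult_1_right)
  also have "\<dots> = ?u * omega8 ^ 8"
    using power_add[of omega8 7 1] by (simp add: mult_ac)
  finally show ?thesis
    by (simp add: omega8_power_8)
qed

definition t_gate :: "bool \<Rightarrow> nat \<Rightarrow> gate" where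
  "t_gate s q = (if s then T q else Tdg q)"

definition t_power :: "bool \<Rightarrow> bool \<Rightarrow> nat" where
  "t_power s b = (if b then if s then 1 else 7 else 0)"

lemma gate_phase_T: "gate_phase (T q) z = (if z ! q then omega8 else 1)"
  by (simp only: gate_phase.simps omega8_def)

lemma gate_phase_Tdg: "gate_phase (Tdg q) z = (if z ! q then omega8 ^ 7 else 1)"
  by (simp only: gate_phase.simps exp_minus_pi_4)

lemma gate_phase_t_gate: "gate_phase (t_gate s q) z = omega8 ^ t_power s (z ! q)"
  by (simp add: t_gate_def t_power_def gate_phase_T gate_phase_Tdg del: gate_phase.simps)

text \<open>A term \<open>(cs, s)\<close> stands for \<open>T\<close> (if \<open>s\<close>) or \<open>T\<dagger>\<close> applied to the parity of the qubits \<open>cs\<close>.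
  The lists for \<open>CZ\<close> and \<open>CCZ\<close> read off \<open>4xy = 2x + 2y - 2(x \<oplus> y)\<close> and
  \<open>4xyz = x + y + z - (x \<oplus> y) - (x \<oplus> z) - (y \<oplus> z) + (x \<oplus> y \<oplus> z)\<close>.\<close>
fun phase_terms :: "gate \<Rightarrow> (nat list \<times> bool) list" where
  "phase_terms (Z i) = [([i], True), ([i], True), ([i], True), ([i], True)]"
| "phase_terms (CZ i j) =
     [([i], True), ([i], True), ([j], True), ([j], True), ([i, j], False), ([i, j], False)]"
| "phase_terms (CCZ i j k) =
     [([i], True), ([j], True), ([k], True), ([i, j], False), ([i, k], False), ([j, k], False),
      ([i, j, k], True)]"
| "phase_terms _ = []"

definition term_phase :: "bool list \<Rightarrow> nat list \<times> bool \<Rightarrow> complex" where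
  "term_phase v t = omega8 ^ t_power (snd t) (parity v (fst t))"

lemma length_phase_terms: "length (phase_terms g) \<le> 7"
  by (cases g) auto

lemma phase_terms_qubits: "t \<in> set (phase_terms g) \<Longrightarrow> set (fst t) \<subseteq> set (gate_qubits g)"
  by (cases g) auto

lemma concat_phase_terms_bounded:
  assumes "\<forall>g\<in>set gs. wf_gate n g" "t \<in> set (concat (map phase_terms gs))"
  shows "set (fst t) \<subseteq> {..<n}"
  using assms phase_terms_qubits by (fastforce simp: wf_gate_def)

lemma prod_term_phase:
  "(\<Prod>t\<leftarrow>ts. term_phase v t) = omega8 ^ (\<Sum>t\<leftarrow>ts. t_power (snd t) (parity v (fst t)))"
  by (induction ts) (auto simp: term_phase_def power_add)

lemma prod_phase_terms:
  assumes "is_diag3_gate g"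
  shows "(\<Prod>t\<leftarrow>phase_terms g. term_phase v t) = gate_phase g v"
proof -
  define e where "e = (\<Sum>t\<leftarrow>phase_terms g. t_power (snd t) (parity v (fst t)))"
  have "(\<Prod>t\<leftarrow>phase_terms g. term_phase v t) = omega8 ^ e"
    unfolding e_def by (rule prod_term_phase)
  also have "\<dots> = omega8 ^ (e mod 8)"
    by (rule omega8_power_mod)
  also have "\<dots> = gate_phase g v"
  proof -
    have "e mod 8 = 4 \<and> gate_phase g v = -1 \<or> e mod 8 = 0 \<and> gate_phase g v = 1"
      using assms unfolding e_def by (cases g) (auto simp: t_power_def)
    then show ?thesis
      by (auto simp: omega8_power_4)
  qed
  finally show ?thesis .
qed

lemma prod_concat_phase_terms:
  "\<forall>g\<in>set gs. is_diag3_gate g \<Longrightarrow>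
    (\<Prod>t\<leftarrow>concat (map phase_terms gs). term_phase v t) = (\<Prod>g\<leftarrow>gs. gate_phase g v)"
  by (induction gs) (simp_all add: prod_phase_terms)

definition parity_fan :: "nat \<Rightarrow> (nat list \<times> bool) list \<Rightarrow> gate list" where
  "parity_fan n ts = cnot_fan n (\<lambda>k. fst (ts ! k)) (length ts)"

definition t_layer :: "nat \<Rightarrow> (nat list \<times> bool) list \<Rightarrow> gate list" where
  "t_layer n ts = map (\<lambda>k. t_gate (snd (ts ! k)) (n + k)) [0..<length ts]"

lemma parity_fan_wf_clifford:
  "\<forall>t\<in>set ts. set (fst t) \<subseteq> {..<n} \<Longrightarrow> g \<in> set (parity_fan n ts) \<Longrightarrow>
    is_clifford_gate g \<and> wf_gate (n + length ts) g"
  unfolding parity_fan_def by (rule cnot_fan_wf_clifford) auto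

lemma t_layer_T_gates: "g \<in> set (t_layer n ts) \<Longrightarrow> is_T_gate g"
  by (auto simp: t_layer_def t_gate_def)

lemma t_layer_is_layer: "is_layer (n + length ts) (t_layer n ts)"
proof -
  have "gate_qubits (t_gate s q) = [q]" for s q
    by (simp add: t_gate_def)
  then have "concat (map gate_qubits (t_layer n ts)) = map (\<lambda>k. n + k) [0..<length ts]"
    by (simp add: t_layer_def o_def)
  then show ?thesis
    by (auto simp: is_layer_def t_layer_def wf_gate_def distinct_map t_gate_def)
qed

lemma circ_mat_phase_gadget:
  fixes n :: nat and ts :: "(nat list \<times> bool) list"
  defines "m \<equiv> length ts" and "F \<equiv> parity_fan n ts"
  assumes ts: "\<forall>t\<in>set ts. set (fst t) \<subseteq> {..<n}"
    and a: "a \<in> bits n" and b: "b \<in> bits m" and c: "c \<in> bits n"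
  shows "circ_mat (n + m) (F @ t_layer n ts @ F) (a @ b) (c @ replicate m False) =
    (if a = c \<and> b = replicate m False then \<Prod>t\<leftarrow>ts. term_phase c t else 0)"
proof -
  let ?O = "replicate m False"
  define W where "W = map (\<lambda>k. parity c (fst (ts ! k))) [0..<m]"
  have lc: "length c = n" and cs: "\<forall>k<m. set (fst (ts ! k)) \<subseteq> {..<n}"
    using c ts by (auto simp: bits_def m_def)
  have F_O: "circ_action F (c @ ?O) = c @ W"
    using circ_action_cnot_fan_all[OF lc _ cs, of ?O]
    by (simp add: F_def parity_fan_def W_def m_def)
  have "map (\<lambda>k. W ! k \<noteq> parity c (fst (ts ! k))) [0..<m] = ?O"
    by (rule nth_equalityI) (simp_all add: W_def)
  then have F_W: "circ_action F (c @ W) = c @ ?O"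
    using circ_action_cnot_fan_all[OF lc _ cs, of W]
    by (simp add: F_def parity_fan_def W_def m_def)
  have Tl_action: "gate_action g z = z" if "g \<in> set (t_layer n ts)" for g z
    using that by (auto simp: t_layer_def t_gate_def)
  have "circ_phase (t_layer n ts) (c @ W) =
      (\<Prod>k\<leftarrow>[0..<m]. gate_phase (t_gate (snd (ts ! k)) (n + k)) (c @ W))"
    by (simp add: circ_phase_trivial_action Tl_action t_layer_def m_def o_def)
  also have "\<dots> = (\<Prod>k\<leftarrow>[0..<m]. term_phase c (ts ! k))"
    using lc by (intro arg_cong[where f = prod_list] map_cong refl)
      (simp add: gate_phase_t_gate term_phase_def W_def nth_append)
  also have "\<dots> = (\<Prod>t\<leftarrow>ts. term_phase c t)"
    unfolding m_def by (rule arg_cong[where f = prod_list], rule nth_equalityI) simp_all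
  finally have Tl_phase: "circ_phase (t_layer n ts) (c @ W) = (\<Prod>t\<leftarrow>ts. term_phase c t)" .
  have F_phase: "circ_phase F z = 1" for z
    by (rule circ_phase_cnots) (auto simp: F_def parity_fan_def cnot_fan_def)
  have non_hadamard: "\<forall>g\<in>set (F @ t_layer n ts @ F). \<not> is_hadamard g"
    by (auto simp: F_def parity_fan_def cnot_fan_def t_layer_def t_gate_def)
  have "c @ ?O \<in> bits (n + m)" and "a @ b = c @ ?O \<longleftrightarrow> a = c \<and> b = ?O"
    using a c by (auto simp: bits_def)
  with circ_mat_non_hadamard[OF non_hadamard] show ?thesis
    by (simp add: circ_action_append circ_phase_append F_O F_W circ_action_trivial Tl_action
        Tl_phase F_phase)
qed

lemma circ_mat_diag3:
  assumes "\<forall>g\<in>set gs. is_diag3_gate g" "c \<in> bits n"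
  shows "circ_mat n gs a c = (if a = c then \<Prod>g\<leftarrow>gs. gate_phase g c else 0)"
proof -
  have "is_diag3_gate g \<Longrightarrow> \<not> is_hadamard g \<and> gate_action g z = z" for g z
    by (cases g) auto
  then show ?thesis
    using assms by (simp add: circ_mat_non_hadamard circ_action_trivial circ_phase_trivial_action)
qed

lemma implements_with_ancillas_phase_gadget:
  fixes gs :: "gate list"
  defines "ts \<equiv> concat (map phase_terms gs)"
  assumes gs: "\<forall>g\<in>set gs. is_diag3_gate g \<and> wf_gate n g"
  shows "implements_with_ancillas n (length ts)
    (parity_fan n ts @ t_layer n ts @ parity_fan n ts) gs"
  unfolding implements_with_ancillas_def
proof (intro ballI)
  fix x z y assume "x \<in> bits n" "z \<in> bits n" "y \<in> bits (length ts)"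
  moreover have "\<forall>t\<in>set ts. set (fst t) \<subseteq> {..<n}"
    using gs concat_phase_terms_bounded unfolding ts_def by blast
  ultimately show "circ_mat (n + length ts) (parity_fan n ts @ t_layer n ts @ parity_fan n ts)
      (x @ y) (z @ replicate (length ts) False) =
    (if y = replicate (length ts) False then circ_mat n gs x z else 0)"
    using gs by (auto simp: circ_mat_phase_gadget circ_mat_diag3 prod_concat_phase_terms ts_def)
qed

lemma length_le_length_gate_qubits: "length gs \<le> length (concat (map gate_qubits gs))"
proof (induction gs)
  case (Cons g gs)
  have "gate_qubits g \<noteq> []"
    by (cases g) auto
  then show ?case
    using Cons by (cases "gate_qubits g") auto
qed simp

lemma length_layer: "is_layer n L \<Longrightarrow> length L \<le> n"
proof -
  assume L: "is_layer n L"
  let ?qs = "concat (map gate_qubits L)"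
  have "distinct ?qs"
    using L by (simp add: is_layer_def)
  then have "length ?qs = card (set ?qs)"
    by (rule distinct_card[symmetric])
  also have "\<dots> \<le> card {..<n}"
    using L by (intro card_mono) (auto simp: is_layer_def wf_gate_def)
  finally show ?thesis
    using length_le_length_gate_qubits[of L] by simp
qed

lemma length_concat_layers: "\<forall>L\<in>set Ls. is_layer n L \<Longrightarrow> length (concat Ls) \<le> n * length Ls"
  by (induction Ls) (auto intro: add_mono length_layer)

lemma length_concat_phase_terms: "length (concat (map phase_terms gs)) \<le> 7 * length gs"
  by (induction gs) (auto intro: add_mono length_phase_terms)

lemma hadamard_all_wf_clifford:
  "g \<in> set (hadamard_all n) \<Longrightarrow> is_clifford_gate g \<and> wf_gate (n + m) g"
  by (auto simp: hadamard_all_def wf_gate_def)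

lemma iqp3_compilation:
  fixes n :: nat and layers :: "gate list list"
  defines "ts \<equiv> concat (map phase_terms (concat layers))"
  assumes layers: "\<forall>L\<in>set layers. is_layer n L \<and> (\<forall>g\<in>set L. is_diag3_gate g)"
  shows "length ts \<le> 7 * n * length layers"
    and "\<forall>g\<in>set ((hadamard_all n @ parity_fan n ts) @ parity_fan n ts @ hadamard_all n).
      is_clifford_gate g \<and> wf_gate (n + length ts) g"
    and "implements_with_ancillas n (length ts)
      ((hadamard_all n @ parity_fan n ts) @ t_layer n ts @ parity_fan n ts @ hadamard_all n)
      (iqp3_circuit n layers)"
proof -
  have gs: "\<forall>g\<in>set (concat layers). is_diag3_gate g \<and> wf_gate n g"
    using layers by (auto simp: is_layer_def)
  have "length ts \<le> 7 * length (concat layers)"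
    unfolding ts_def by (rule length_concat_phase_terms)
  also have "\<dots> \<le> 7 * (n * length layers)"
    using length_concat_layers[of layers n] layers by simp
  finally show "length ts \<le> 7 * n * length layers"
    by (simp add: mult.assoc)
  have "\<forall>t\<in>set ts. set (fst t) \<subseteq> {..<n}"
    using gs concat_phase_terms_bounded unfolding ts_def by blast
  then show "\<forall>g\<in>set ((hadamard_all n @ parity_fan n ts) @ parity_fan n ts @ hadamard_all n).
      is_clifford_gate g \<and> wf_gate (n + length ts) g"
    using parity_fan_wf_clifford hadamard_all_wf_clifford by auto
  have "ignores_ancillas n (length ts) (hadamard_all n)"
    by (rule ignores_ancillas_wf_gates) (auto simp: hadamard_all_def wf_gate_def)
  then show "implements_with_ancillas n (length ts)
      ((hadamard_all n @ parity_fan n ts) @ t_layer n ts @ parity_fan n ts @ hadamard_all n)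
      (iqp3_circuit n layers)"
    using implements_with_ancillas_prepend implements_with_ancillas_append
      implements_with_ancillas_phase_gadget[OF gs]
    unfolding iqp3_circuit_def ts_def by fastforce
qed

theorem lemma3:
  shows "\<exists>K::nat. \<forall>(n::nat) (d::nat) (layers::gate list list).
     length layers = d \<and> (\<forall>L\<in>set layers. is_layer n L \<and> (\<forall>g\<in>set L. is_diag3_gate g)) \<longrightarrow>
     (\<exists>(m::nat) C1 Tl C2.
        m \<le> K * n * d \<and>
        (\<forall>g\<in>set (C1 @ C2). is_clifford_gate g \<and> wf_gate (n + m) g) \<and>
        is_layer (n + m) Tl \<and> (\<forall>g\<in>set Tl. is_T_gate g) \<and>
        (\<forall>x\<in>bits n. \<forall>z\<in>bits n. \<forall>y\<in>bits m.
           circ_mat (n + m) (C1 @ Tl @ C2) (x @ y) (z @ replicate m False) =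
           (if y = replicate m False then circ_mat n (iqp3_circuit n layers) x z else 0)))"
proof (rule exI[of _ 7], intro allI impI)
  fix n d :: nat and layers :: "gate list list"
  assume "length layers = d \<and> (\<forall>L\<in>set layers. is_layer n L \<and> (\<forall>g\<in>set L. is_diag3_gate g))"
  then show "\<exists>m C1 Tl C2. m \<le> 7 * n * d \<and>
      (\<forall>g\<in>set (C1 @ C2). is_clifford_gate g \<and> wf_gate (n + m) g) \<and>
      is_layer (n + m) Tl \<and> (\<forall>g\<in>set Tl. is_T_gate g) \<and>
      (\<forall>x\<in>bits n. \<forall>z\<in>bits n. \<forall>y\<in>bits m.
         circ_mat (n + m) (C1 @ Tl @ C2) (x @ y) (z @ replicate m False) =
         (if y = replicate m False then circ_mat n (iqp3_circuit n layers) x z else 0))"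
    using iqp3_compilation[of layers n] t_layer_is_layer t_layer_T_gates
    unfolding implements_with_ancillas_def by blast
qed

end
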